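(* Let $p\neq 2$ be a prime and $G=Z_{p^{\lambda_1}}\times\cdots\times Z_{p^{\lambda_n}}$ with $0<\lambda_1<\cdots<\lambda_n$. If $n\ge 2$ and $\lambda_n-\lambda_{n-1}\ge 2$, then $J(G)$ has precisely two maximal down-set chains, namely $D_1(G)=\{J(i,1):i\in\{1,\dots,n\}\}$ and $D_2(G)=\{J(n,j):j\in\{1,\dots,\lambda_n-\lambda_{n-1}\}\}$.
   Context: Tuples are ordered componentwise; for $\mathbf 0\le\mathbf a\le(\lambda_1,\dots,\lambda_n)$, $T(\mathbf a)$ is the set of $(g_1,\dots,g_n)\in G$ with $|g_i|=p^{a_i}$, and $R(\mathbf a)=\bigcup_{\mathbf b\le\mathbf a}T(\mathbf b)$. For $i\in\{1,\dots,n\}$ and $j\in\{1,\dots,\lambda_i\}$, $J(i,j)=R(\mathbf a)$ where $a_k=j$ for $k\ge i$ and $a_k=\max\{0,\,j-(\lambda_i-\lambda_k)\}$ for $k<i$. $J(G)$ is the set of all $J(i,j)$, partially ordered by inclusion. A down set of a poset $P$ is a subset $X$ such that $x\le y\in X$ implies $x\in X$; a down-set chain is a subset that is both a chain and a down set; it is maximal if it is not contained in a strictly larger down-set chain. *)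

theory Defs
  imports "HOL-Algebra.Elementary_Groups" "HOL-Algebra.Multiplicative_Group" "HOL-Computational_Algebra.Primes"
begin

text \<open>G = Z_{p^lam 1} x ... x Z_{p^lam n}, elements as tuples g :: nat => int indexed by 1..n,
  component i lying in the carrier of integer_mod_group (p ^ lam i); outside 1..n the tuple is 0.\<close>
definition cycG :: "nat \<Rightarrow> nat \<Rightarrow> (nat \<Rightarrow> nat) \<Rightarrow> (nat \<Rightarrow> int) set" where
  "cycG p n lam = {g. (\<forall>i\<in>{1..n}. g i \<in> carrier (integer_mod_group (p ^ lam i)))
                      \<and> (\<forall>i. i \<notin> {1..n} \<longrightarrow> g i = 0)}"

definition comp_ord :: "nat \<Rightarrow> (nat \<Rightarrow> nat) \<Rightarrow> (nat \<Rightarrow> int) \<Rightarrow> nat \<Rightarrow> nat" where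
  "comp_ord p lam g i = group.ord (integer_mod_group (p ^ lam i)) (g i)"

definition T_set :: "nat \<Rightarrow> nat \<Rightarrow> (nat \<Rightarrow> nat) \<Rightarrow> (nat \<Rightarrow> nat) \<Rightarrow> (nat \<Rightarrow> int) set" where
  "T_set p n lam a = {g \<in> cycG p n lam. \<forall>i\<in>{1..n}. comp_ord p lam g i = p ^ a i}"

definition R_set :: "nat \<Rightarrow> nat \<Rightarrow> (nat \<Rightarrow> nat) \<Rightarrow> (nat \<Rightarrow> nat) \<Rightarrow> (nat \<Rightarrow> int) set" where
  "R_set p n lam a = (\<Union>b \<in> {b. \<forall>i\<in>{1..n}. b i \<le> a i}. T_set p n lam b)"

definition J_exp :: "nat \<Rightarrow> (nat \<Rightarrow> nat) \<Rightarrow> nat \<Rightarrow> nat \<Rightarrow> nat \<Rightarrow> nat" where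
  "J_exp n lam i j k = (if k \<ge> i then j
      else nat (max 0 (int j - (int (lam i) - int (lam k)))))"

definition J_set :: "nat \<Rightarrow> nat \<Rightarrow> (nat \<Rightarrow> nat) \<Rightarrow> nat \<Rightarrow> nat \<Rightarrow> (nat \<Rightarrow> int) set" where
  "J_set p n lam i j = R_set p n lam (J_exp n lam i j)"

definition JG :: "nat \<Rightarrow> nat \<Rightarrow> (nat \<Rightarrow> nat) \<Rightarrow> (nat \<Rightarrow> int) set set" where
  "JG p n lam = {J_set p n lam i j | i j. i \<in> {1..n} \<and> j \<in> {1..lam i}}"

definition is_down_set :: "'a set \<Rightarrow> ('a \<Rightarrow> 'a \<Rightarrow> bool) \<Rightarrow> 'a set \<Rightarrow> bool" where
  "is_down_set P leq X \<longleftrightarrow> X \<subseteq> P \<and> (\<forall>x\<in>P. \<forall>y\<in>X. leq x y \<longrightarrow> x \<in> X)"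

definition is_chain_in :: "'a set \<Rightarrow> ('a \<Rightarrow> 'a \<Rightarrow> bool) \<Rightarrow> 'a set \<Rightarrow> bool" where
  "is_chain_in P leq X \<longleftrightarrow> X \<subseteq> P \<and> (\<forall>x\<in>X. \<forall>y\<in>X. leq x y \<or> leq y x)"

definition down_set_chain :: "'a set \<Rightarrow> ('a \<Rightarrow> 'a \<Rightarrow> bool) \<Rightarrow> 'a set \<Rightarrow> bool" where
  "down_set_chain P leq X \<longleftrightarrow> is_chain_in P leq X \<and> is_down_set P leq X"

definition maximal_down_set_chain :: "'a set \<Rightarrow> ('a \<Rightarrow> 'a \<Rightarrow> bool) \<Rightarrow> 'a set \<Rightarrow> bool" where
  "maximal_down_set_chain P leq X \<longleftrightarrow> down_set_chain P leq X \<and>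
     \<not> (\<exists>Y. down_set_chain P leq Y \<and> X \<subset> Y)"

end

theory Submission
  imports Defs
begin

text \<open>
  Every J(i,j) is an R(a), and R(a) \<subseteq> R(b) holds exactly when a \<le> b componentwise, because
  R(a) contains an element whose k-th component has order exactly p^a_k. So the poset J(G) is
  the set of exponent vectors of the J(i,j) under the componentwise order. Call these vectors
  v(i,j). Then v(i,1) is the indicator of {i..n}, and for j \<le> \<lambda>_n - \<lambda>_{n-1} the vector v(n,j)
  is j at n and 0 elsewhere. A member of J(G) outside D_2 has nonzero (n-1)-st and n-th
  exponents, hence lies above J(n-1,1); a member outside D_1 has n-th exponent at least 2, hence
  lies above J(n,2). When \<lambda>_n - \<lambda>_{n-1} \<ge> 2 these two elements are incomparable, so no down-set
  chain can leave both D_1 and D_2.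
\<close>

lemma ord_integer_mod_group_factor:
  assumes "r > 0"
  shows "group.ord (integer_mod_group (k * r)) (int r mod int (k * r)) = k"
proof -
  interpret Z: group "integer_mod_group (k * r)" by simp
  have r_mem: "int r mod int (k * r) \<in> carrier (integer_mod_group (k * r))"
    by (cases "k = 0") (auto simp: carrier_integer_mod_group)
  have "(int m * (int r mod int (k * r))) mod int (k * r) = 0 \<longleftrightarrow> k dvd m" for m
  proof -
    have "(int m * (int r mod int (k * r))) mod int (k * r) = int ((m * r) mod (k * r))"
      by (simp add: mod_mult_right_eq zmod_int)
    moreover have "(m * r) mod (k * r) = 0 \<longleftrightarrow> k dvd m"
      using assms by (simp flip: dvd_eq_mod_eq_0)
    ultimately show ?thesis by (simp only: of_nat_eq_0_iff)
  qed
  then show ?thesis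
    by (subst Z.ord_unique[OF r_mem]) (simp only: pow_integer_mod_group one_integer_mod_group simp_thms)
qed

lemma mem_R_set_iff:
  assumes "prime p"
  shows "g \<in> R_set p n lam a \<longleftrightarrow>
           g \<in> cycG p n lam \<and> (\<forall>i\<in>{1..n}. comp_ord p lam g i dvd p ^ a i)"
proof
  assume "g \<in> R_set p n lam a"
  then obtain b where "\<forall>i\<in>{1..n}. b i \<le> a i" "g \<in> T_set p n lam b"
    unfolding R_set_def by blast
  then show "g \<in> cycG p n lam \<and> (\<forall>i\<in>{1..n}. comp_ord p lam g i dvd p ^ a i)"
    unfolding T_set_def by (auto intro: le_imp_power_dvd)
next
  assume g: "g \<in> cycG p n lam \<and> (\<forall>i\<in>{1..n}. comp_ord p lam g i dvd p ^ a i)"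
  have "\<forall>i\<in>{1..n}. \<exists>e. e \<le> a i \<and> comp_ord p lam g i = p ^ e"
    using g divides_primepow_nat[OF assms] by blast
  then obtain b where "\<forall>i\<in>{1..n}. b i \<le> a i \<and> comp_ord p lam g i = p ^ b i"
    by metis
  then show "g \<in> R_set p n lam a"
    using g unfolding R_set_def T_set_def by blast
qed

lemma R_set_subset_iff:
  assumes p: "prime p" and a_le: "\<forall>k\<in>{1..n}. a k \<le> lam k"
  shows "R_set p n lam a \<subseteq> R_set p n lam b \<longleftrightarrow> (\<forall>k\<in>{1..n}. a k \<le> b k)"
proof
  assume sub: "R_set p n lam a \<subseteq> R_set p n lam b"
  have p_pos: "p > 0" using p prime_gt_0_nat by blast
  have split: "p ^ lam k = p ^ a k * p ^ (lam k - a k)" if "k \<in> {1..n}" for k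
    using a_le that by (simp flip: power_add)
  define g where
    "g k = (if k \<in> {1..n} then int (p ^ (lam k - a k)) mod int (p ^ lam k) else 0)" for k
  have g_ord: "comp_ord p lam g k = p ^ a k" if "k \<in> {1..n}" for k
    using ord_integer_mod_group_factor[of "p ^ (lam k - a k)" "p ^ a k"] p_pos split[OF that] that
    by (simp add: comp_ord_def g_def)
  have "g \<in> cycG p n lam"
    using p_pos by (auto simp: cycG_def g_def carrier_integer_mod_group)
  then have "g \<in> R_set p n lam a"
    using mem_R_set_iff[OF p] g_ord by auto
  then have "g \<in> R_set p n lam b"
    using sub by blast
  then have "\<forall>k\<in>{1..n}. p ^ a k dvd p ^ b k"
    using mem_R_set_iff[OF p] g_ord by auto
  then show "\<forall>k\<in>{1..n}. a k \<le> b k"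
    using power_dvd_imp_le prime_gt_1_nat[OF p] by blast
next
  assume "\<forall>k\<in>{1..n}. a k \<le> b k"
  then show "R_set p n lam a \<subseteq> R_set p n lam b"
    unfolding subset_iff mem_R_set_iff[OF p] using le_imp_power_dvd dvd_trans by blast
qed

lemma down_set_chain_subset_either:
  assumes X: "down_set_chain P leq X"
    and a: "a \<in> P" and b: "b \<in> P" and incomparable: "\<not> leq a b" "\<not> leq b a"
    and above_b: "\<And>x. x \<in> P \<Longrightarrow> x \<notin> D\<^sub>1 \<Longrightarrow> leq b x"
    and above_a: "\<And>x. x \<in> P \<Longrightarrow> x \<notin> D\<^sub>2 \<Longrightarrow> leq a x"
  shows "X \<subseteq> D\<^sub>1 \<or> X \<subseteq> D\<^sub>2"
proof (rule ccontr)
  have X_sub: "X \<subseteq> P"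
    and down: "\<And>u v. u \<in> P \<Longrightarrow> v \<in> X \<Longrightarrow> leq u v \<Longrightarrow> u \<in> X"
    and chain: "\<And>u v. u \<in> X \<Longrightarrow> v \<in> X \<Longrightarrow> leq u v \<or> leq v u"
    using X unfolding down_set_chain_def is_chain_in_def is_down_set_def by blast+
  assume "\<not> (X \<subseteq> D\<^sub>1 \<or> X \<subseteq> D\<^sub>2)"
  then obtain x y where x: "x \<in> X" "x \<notin> D\<^sub>1" and y: "y \<in> X" "y \<notin> D\<^sub>2"
    by blast
  have "b \<in> X"
    using down[OF b x(1) above_b] x X_sub by blast
  moreover have "a \<in> X"
    using down[OF a y(1) above_a] y X_sub by blast
  ultimately show False
    using chain incomparable by blast
qed

lemma maximal_down_set_chains_eq_pair:
  assumes D\<^sub>1: "down_set_chain P leq D\<^sub>1" and D\<^sub>2: "down_set_chain P leq D\<^sub>2"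
    and a: "a \<in> D\<^sub>1" and b: "b \<in> D\<^sub>2" and incomparable: "\<not> leq a b" "\<not> leq b a"
    and above_b: "\<And>x. x \<in> P \<Longrightarrow> x \<notin> D\<^sub>1 \<Longrightarrow> leq b x"
    and above_a: "\<And>x. x \<in> P \<Longrightarrow> x \<notin> D\<^sub>2 \<Longrightarrow> leq a x"
  shows "{X. maximal_down_set_chain P leq X} = {D\<^sub>1, D\<^sub>2} \<and> D\<^sub>1 \<noteq> D\<^sub>2"
proof -
  have "a \<in> P" "b \<in> P"
    using a b D\<^sub>1 D\<^sub>2 unfolding down_set_chain_def is_chain_in_def by blast+
  note either = down_set_chain_subset_either[OF _ this incomparable above_b above_a]
  have "a \<notin> D\<^sub>2" "b \<notin> D\<^sub>1"
    using a b D\<^sub>1 D\<^sub>2 incomparable unfolding down_set_chain_def is_chain_in_def by blast+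
  then have not_sub: "\<not> D\<^sub>1 \<subseteq> D\<^sub>2" "\<not> D\<^sub>2 \<subseteq> D\<^sub>1"
    using a b by blast+
  have "\<not> D\<^sub>1 \<subset> Y" "\<not> D\<^sub>2 \<subset> Y" if "down_set_chain P leq Y" for Y
    using either[OF that] not_sub by blast+
  then have max: "maximal_down_set_chain P leq D\<^sub>1" "maximal_down_set_chain P leq D\<^sub>2"
    unfolding maximal_down_set_chain_def using D\<^sub>1 D\<^sub>2 by blast+
  have "X = D\<^sub>1 \<or> X = D\<^sub>2" if "maximal_down_set_chain P leq X" for X
  proof -
    have "down_set_chain P leq X" "\<not> X \<subset> D\<^sub>1" "\<not> X \<subset> D\<^sub>2"
      using that D\<^sub>1 D\<^sub>2 unfolding maximal_down_set_chain_def by blast+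
    then show ?thesis
      using either by blast
  qed
  then show ?thesis
    using max not_sub by blast
qed

locale increasing_type =
  fixes p n :: nat and lam :: "nat \<Rightarrow> nat"
  assumes prime: "prime p" and two_le_n: "2 \<le> n" and lam_1_pos: "0 < lam 1"
    and lam_less: "\<And>i k. i \<in> {1..n} \<Longrightarrow> k \<in> {1..n} \<Longrightarrow> i < k \<Longrightarrow> lam i < lam k"
begin

abbreviation "J \<equiv> J_set p n lam"
abbreviation "v \<equiv> J_exp n lam"
abbreviation "gap \<equiv> lam n - lam (n - 1)"
abbreviation "D\<^sub>1 \<equiv> {J i 1 | i. i \<in> {1..n}}"
abbreviation "D\<^sub>2 \<equiv> {J n j | j. j \<in> {1..gap}}"

lemma n_mem: "n \<in> {1..n}" and n_minus_1_mem: "n - 1 \<in> {1..n}"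
  using two_le_n by auto

lemma lam_le: "i \<in> {1..n} \<Longrightarrow> k \<in> {1..n} \<Longrightarrow> i \<le> k \<Longrightarrow> lam i \<le> lam k"
  using lam_less by (metis order_le_less)

lemma lam_pos: "k \<in> {1..n} \<Longrightarrow> 0 < lam k"
  using lam_le[of 1 k] lam_1_pos by auto

lemma J_exp_eq:
  "i \<in> {1..n} \<Longrightarrow> k \<in> {1..n} \<Longrightarrow> v i j k = (if i \<le> k then j else j - (lam i - lam k))"
  using lam_le[of k i] by (auto simp: J_exp_def max_def nat_diff_distrib)

lemma J_exp_le_lam: "i \<in> {1..n} \<Longrightarrow> j \<le> lam i \<Longrightarrow> k \<in> {1..n} \<Longrightarrow> v i j k \<le> lam k"
  using lam_le[of i k] lam_le[of k i] by (auto simp: J_exp_eq)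

lemma J_exp_one: "i \<in> {1..n} \<Longrightarrow> k \<in> {1..n} \<Longrightarrow> v i 1 k = (if i \<le> k then 1 else 0)"
  using lam_less[of k i] by (auto simp: J_exp_eq)

lemma J_exp_within_gap:
  assumes "j \<le> gap" and k: "k \<in> {1..n}"
  shows "v n j k = (if k = n then j else 0)"
proof (cases "k = n")
  case False
  then have "k \<le> n - 1"
    using k by auto
  then have "lam k \<le> lam (n - 1)"
    using lam_le[OF k n_minus_1_mem] by simp
  then show ?thesis
    using assms False by (simp add: J_exp_eq[OF n_mem k])
qed (simp add: J_exp_eq[OF n_mem n_mem])

lemma J_set_subset_iff:
  "i \<in> {1..n} \<Longrightarrow> j \<le> lam i \<Longrightarrow> J i j \<subseteq> J i' j' \<longleftrightarrow> (\<forall>k\<in>{1..n}. v i j k \<le> v i' j' k)"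
  unfolding J_set_def using R_set_subset_iff[OF prime] J_exp_le_lam by blast

lemma JG_cases:
  assumes "x \<in> JG p n lam"
  obtains i j where "x = J i j" "i \<in> {1..n}" "j \<in> {1..lam i}"
  using assms unfolding JG_def by blast

lemma J_set_in_JG: "i \<in> {1..n} \<Longrightarrow> j \<in> {1..lam i} \<Longrightarrow> J i j \<in> JG p n lam"
  unfolding JG_def by blast

lemma down_set_chain_D1: "down_set_chain (JG p n lam) (\<subseteq>) D\<^sub>1"
proof -
  have sub: "D\<^sub>1 \<subseteq> JG p n lam"
    using lam_pos J_set_in_JG by fastforce
  have mono: "J i 1 \<subseteq> J i' 1" if "i \<in> {1..n}" "i' \<in> {1..n}" "i' \<le> i" for i i'
    using that lam_pos[of i] J_exp_one by (subst J_set_subset_iff) auto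
  have chain: "is_chain_in (JG p n lam) (\<subseteq>) D\<^sub>1"
    unfolding is_chain_in_def
  proof (intro conjI sub ballI)
    fix x y assume "x \<in> D\<^sub>1" "y \<in> D\<^sub>1"
    then obtain i i' where "x = J i 1" "y = J i' 1" "i \<in> {1..n}" "i' \<in> {1..n}"
      by auto
    then show "x \<subseteq> y \<or> y \<subseteq> x"
      using mono nat_le_linear by metis
  qed
  have "is_down_set (JG p n lam) (\<subseteq>) D\<^sub>1"
    unfolding is_down_set_def
  proof (intro conjI sub ballI impI)
    fix x y assume P: "x \<in> JG p n lam" and y: "y \<in> D\<^sub>1" and "x \<subseteq> y"
    obtain i where i: "i \<in> {1..n}" and le: "x \<subseteq> J i 1"
      using y \<open>x \<subseteq> y\<close> by blast
    obtain i' j' where x: "x = J i' j'" "i' \<in> {1..n}" "j' \<in> {1..lam i'}"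
      using P by (rule JG_cases)
    have "v i' j' i' \<le> v i 1 i'"
      using J_set_subset_iff x le by auto
    then have "j' \<le> 1"
      using J_exp_one[of i i'] J_exp_eq[of i' i'] i x by (auto split: if_splits)
    then show "x \<in> D\<^sub>1" using x by auto
  qed
  with chain show ?thesis
    unfolding down_set_chain_def by blast
qed

lemma down_set_chain_D2: "down_set_chain (JG p n lam) (\<subseteq>) D\<^sub>2"
proof -
  have sub: "D\<^sub>2 \<subseteq> JG p n lam"
    using J_set_in_JG[OF n_mem] by fastforce
  have mono: "J n j \<subseteq> J n j'" if "j' \<le> gap" "j \<le> j'" for j j'
    using that J_exp_within_gap by (subst J_set_subset_iff[OF n_mem]) auto
  have chain: "is_chain_in (JG p n lam) (\<subseteq>) D\<^sub>2"
    unfolding is_chain_in_def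
  proof (intro conjI sub ballI)
    fix x y assume "x \<in> D\<^sub>2" "y \<in> D\<^sub>2"
    then obtain j j' where "x = J n j" "y = J n j'" "j \<le> gap" "j' \<le> gap"
      by auto
    then show "x \<subseteq> y \<or> y \<subseteq> x"
      using mono nat_le_linear by metis
  qed
  have "is_down_set (JG p n lam) (\<subseteq>) D\<^sub>2"
    unfolding is_down_set_def
  proof (intro conjI sub ballI impI)
    fix x y assume P: "x \<in> JG p n lam" and y: "y \<in> D\<^sub>2" and "x \<subseteq> y"
    obtain j where j: "j \<in> {1..gap}" and sub_x: "x \<subseteq> J n j"
      using y \<open>x \<subseteq> y\<close> by blast
    obtain i' j' where x: "x = J i' j'" "i' \<in> {1..n}" "j' \<in> {1..lam i'}"
      using P by (rule JG_cases)
    have le: "\<forall>k\<in>{1..n}. v i' j' k \<le> v n j k"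
      using J_set_subset_iff x sub_x by auto
    have "i' = n"
    proof (rule ccontr)
      assume "i' \<noteq> n"
      then have "v i' j' (n - 1) = j'"
        using x J_exp_eq[OF _ n_minus_1_mem] by auto
      moreover have "v n j (n - 1) = 0"
        using J_exp_within_gap[OF _ n_minus_1_mem] j two_le_n by auto
      ultimately show False
        using le n_minus_1_mem x by fastforce
    qed
    moreover have "j' \<le> j"
      using le n_mem J_exp_eq[OF _ n_mem] \<open>i' = n\<close> by fastforce
    ultimately show "x \<in> D\<^sub>2" using x j by auto
  qed
  with chain show ?thesis
    unfolding down_set_chain_def by blast
qed

lemma J_nm1_1_subset_if_notin_D2: "x \<in> JG p n lam \<Longrightarrow> x \<notin> D\<^sub>2 \<Longrightarrow> J (n - 1) 1 \<subseteq> x"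
proof -
  assume "x \<in> JG p n lam" and not_D\<^sub>2: "x \<notin> D\<^sub>2"
  from \<open>x \<in> JG p n lam\<close> obtain i j where x: "x = J i j" "i \<in> {1..n}" "j \<in> {1..lam i}"
    by (rule JG_cases)
  have at_nm1: "1 \<le> v i j (n - 1)"
  proof (cases "i = n")
    case True
    then have "gap < j"
      using not_D\<^sub>2 x by (auto simp: not_le[symmetric])
    then show ?thesis
      using True two_le_n J_exp_eq[OF n_mem n_minus_1_mem] by auto
  next
    case False
    then have "i \<le> n - 1"
      using x by auto
    then show ?thesis
      using x J_exp_eq[OF _ n_minus_1_mem] by simp
  qed
  have at_n: "1 \<le> v i j n"
    using x J_exp_eq[OF _ n_mem] by simp
  have "v (n - 1) 1 k \<le> v i j k" if k: "k \<in> {1..n}" for k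
  proof (cases "n - 1 \<le> k")
    case True
    then have "k = n - 1 \<or> k = n"
      using k by auto
    then show ?thesis
      using J_exp_one[OF n_minus_1_mem k] at_nm1 at_n by auto
  qed (use J_exp_one[OF n_minus_1_mem k] in auto)
  then show ?thesis
    using J_set_subset_iff[OF n_minus_1_mem] lam_pos[OF n_minus_1_mem] x by auto
qed

lemma J_n_2_subset_if_notin_D1:
  assumes gap: "2 \<le> gap" and "x \<in> JG p n lam" "x \<notin> D\<^sub>1"
  shows "J n 2 \<subseteq> x"
proof -
  obtain i j where x: "x = J i j" "i \<in> {1..n}" "j \<in> {1..lam i}"
    using assms(2) by (rule JG_cases)
  have "j \<noteq> 1"
    using assms(3) x by auto
  have "\<forall>k\<in>{1..n}. v n 2 k \<le> v i j k"
    using J_exp_within_gap[OF gap] J_exp_eq[OF x(2) n_mem] x \<open>j \<noteq> 1\<close> by auto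
  then show ?thesis
    using J_set_subset_iff[OF n_mem] gap x by simp
qed

lemma J_nm1_1_J_n_2_incomparable:
  assumes gap: "2 \<le> gap"
  shows "\<not> J (n - 1) 1 \<subseteq> J n 2" "\<not> J n 2 \<subseteq> J (n - 1) 1"
proof -
  have "v (n - 1) 1 (n - 1) = 1" "v n 2 (n - 1) = 0"
    using J_exp_one J_exp_within_gap[OF gap] n_minus_1_mem two_le_n by auto
  moreover have "J (n - 1) 1 \<subseteq> J n 2 \<longleftrightarrow> (\<forall>k\<in>{1..n}. v (n - 1) 1 k \<le> v n 2 k)"
    using J_set_subset_iff[OF n_minus_1_mem] lam_pos[OF n_minus_1_mem] by simp
  ultimately show "\<not> J (n - 1) 1 \<subseteq> J n 2"
    using n_minus_1_mem by force
  have "v n 2 n = 2" "v (n - 1) 1 n = 1"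
    using J_exp_one J_exp_within_gap[OF gap] n_mem n_minus_1_mem by auto
  moreover have "J n 2 \<subseteq> J (n - 1) 1 \<longleftrightarrow> (\<forall>k\<in>{1..n}. v n 2 k \<le> v (n - 1) 1 k)"
    using J_set_subset_iff[OF n_mem] gap by simp
  ultimately show "\<not> J n 2 \<subseteq> J (n - 1) 1"
    using n_mem by force
qed

theorem maximal_down_set_chains_JG:
  assumes "2 \<le> gap"
  shows "{X. maximal_down_set_chain (JG p n lam) (\<subseteq>) X} = {D\<^sub>1, D\<^sub>2} \<and> D\<^sub>1 \<noteq> D\<^sub>2"
proof -
  have "J (n - 1) 1 \<in> D\<^sub>1" "J n 2 \<in> D\<^sub>2"
    using n_minus_1_mem assms by auto
  then show ?thesis
    by (rule maximal_down_set_chains_eq_pair[OF down_set_chain_D1 down_set_chain_D2 _ _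
          J_nm1_1_J_n_2_incomparable[OF assms] J_n_2_subset_if_notin_D1[OF assms]
          J_nm1_1_subset_if_notin_D2])
qed

end

theorem mainTheorem19:
  fixes p n :: nat and lam :: "nat \<Rightarrow> nat"
  assumes "prime p" and "p \<noteq> 2"
    and "n \<ge> 2"
    and "0 < lam 1"
    and "\<And>i k. i \<in> {1..n} \<Longrightarrow> k \<in> {1..n} \<Longrightarrow> i < k \<Longrightarrow> lam i < lam k"
    and "lam n - lam (n - 1) \<ge> 2"
  shows "{X. maximal_down_set_chain (JG p n lam) (\<subseteq>) X} =
           {{J_set p n lam i 1 | i. i \<in> {1..n}},
            {J_set p n lam n j | j. j \<in> {1..lam n - lam (n - 1)}}}
       \<and> {J_set p n lam i 1 | i. i \<in> {1..n}} \<noteq> {J_set p n lam n j | j. j \<in> {1..lam n - lam (n - 1)}}"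
proof -
  interpret increasing_type p n lam
    using assms by unfold_locales auto
  show ?thesis
    using maximal_down_set_chains_JG assms(6) .
qed

end
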